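(* Let $p$ be a propositional variable. The infinite set $\Sigma=\{\blacksquare^n p: n\in\mathbb{N}\}\cup\{\neg\mathsf{H}p\}$ is not satisfiable in any $\mathsf{TLAE}$-model (there is no $\mathsf{TLAE}$-model $\mathfrak{M}$ and moment $w$ with $\mathfrak{M},w\models\psi$ for all $\psi\in\Sigma$), whereas every finite subset of $\Sigma$ is satisfiable at some moment of some $\mathsf{TLAE}$-model. Consequently $\mathsf{TLAE}$ is not compact with respect to $\mathsf{TLAE}$-models.
   Context: Here $\blacksquare^n$ denotes $n$-fold iteration of $\blacksquare$ ($\blacksquare^0 p=p$). Language: fix finite sets $\mathtt{Action}=\{\delta_1,\dots,\delta_n\}$, $\mathtt{Agent}=\{\alpha_1,\dots,\alpha_m\}$; action types $\mathtt{Action}^*$ generated by $\Delta::=\delta_j\mid\Delta\cup\Delta\mid\overline{\Delta}$; propositional constants $\mathfrak{d}^{\alpha_i}_j$, $\mathfrak{e}^{\alpha_i}$; variables $\mathtt{Var}$. Formulas: $\phi::=p\mid\mathfrak{e}^{\alpha_i}\mid\mathfrak{d}^{\alpha_i}_j\mid\neg\phi\mid\phi\to\phi\mid\Box\phi\mid[\mathsf{A}]\phi\mid\blacksquare\phi\mid\mathsf{H}\phi$. Translation: $t(\delta_j^{\alpha_i})=\mathfrak{d}^{\alpha_i}_j$, $t(\overline{\Delta}^{\alpha_i})=\neg t(\Delta^{\alpha_i})$, $t(\Delta^{\alpha_i}\cup\Gamma^{\alpha_k})=t(\Delta^{\alpha_i})\vee t(\Gamma^{\alpha_k})$. Semantics: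 an $\mathcal{L}$-frame is $\langle W,\{W_{\mathfrak{d}^{\alpha_i}_j}\},\{W_{\mathfrak{e}^{\alpha_i}}\},R_\Box,R_{\mathsf{A}},R_\blacksquare,R_{\mathsf{H}}\rangle$ with subsets $W_c\subseteq W$ and binary relations on $W$; a model adds $V:\mathtt{Var}\to\mathcal{P}(W)$; constants $c$ are true exactly on $W_c$; $\Box,[\mathsf{A}],\blacksquare,\mathsf{H}$ are interpreted by universal quantification over $R_\Box,R_{\mathsf{A}},R_\blacksquare,R_{\mathsf{H}}$-successors, Booleans as usual. $W_{t(\delta_j^{\alpha_i})}=W_{\mathfrak{d}^{\alpha_i}_j}$, $W_{t(\overline{\Delta}^{\alpha_i})}=W\setminus W_{t(\Delta^{\alpha_i})}$, $W_{t(\Delta^{\alpha_i}\cup\Gamma^{\alpha_k})}=W_{t(\Delta^{\alpha_i})}\cup W_{t(\Gamma^{\alpha_k})}$. A $\mathsf{TLAE}$-frame satisfies: (pA3) $R_{\mathsf{A}}wu\wedge R_{\mathsf{A}}wv\Rightarrow u=v$; (pA4) $R_{\mathsf{A}}\subseteq R_\Box$; (pA5) for every $w$, pairwise distinct agents $\alpha_1,\dots,\alpha_k$ and $\Delta_1,\dots,\Delta_k\in\mathtt{Action}^*$, if each $W_{t(\Delta_i^{\alpha_i})}$ contains an $R_\Box$-successor of $w$, then $\bigcap_iW_{t(\Delta_i^{\alpha_i})}$ contains one; (pA6) if some $R_\Box$-successor of $w$ is in $W_{\mathfrak{e}^{\alpha_i}}$ then some $R_\Box$-successor of $w$ is not;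 (pA10;A11) $R_\Box wv$ iff $R_\blacksquare vw$; (pA12) $R_\blacksquare wu\wedge R_\blacksquare wv\Rightarrow u=v$; (pA9;A14) $R_{\mathsf{H}}$ is the transitive closure of $R_\blacksquare$; (pA13) for every $w$, either $w$ has no $R_{\mathsf{H}}$-successor or there is $u$ with $R_{\mathsf{H}}wu$ having no $R_{\mathsf{H}}$-successor. A $\mathsf{TLAE}$-model is a model over a $\mathsf{TLAE}$-frame. *)

theory Defs
  imports Main
begin

datatype 'ac act = Basic 'ac | AUnion "'ac act" "'ac act" | ACompl "'ac act"

datatype ('ag, 'ac, 'v) fm =
    Var 'v
  | ExConst 'ag
  | DoConst 'ag 'ac
  | Neg "('ag, 'ac, 'v) fm"
  | Imp "('ag, 'ac, 'v) fm" "('ag, 'ac, 'v) fm"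
  | Box "('ag, 'ac, 'v) fm"
  | Astit "('ag, 'ac, 'v) fm"
  | BBox "('ag, 'ac, 'v) fm"
  | Hist "('ag, 'ac, 'v) fm"

text \<open>L-frames: the set of worlds is the whole type 'w.\<close>
record ('w, 'ag, 'ac) frame =
  Wd :: "'ag \<Rightarrow> 'ac \<Rightarrow> 'w set"
  We :: "'ag \<Rightarrow> 'w set"
  RBox :: "'w \<Rightarrow> 'w \<Rightarrow> bool"
  RA :: "'w \<Rightarrow> 'w \<Rightarrow> bool"
  RBB :: "'w \<Rightarrow> 'w \<Rightarrow> bool"
  RH :: "'w \<Rightarrow> 'w \<Rightarrow> bool"

fun sat :: "('w, 'ag, 'ac) frame \<Rightarrow> ('v \<Rightarrow> 'w set) \<Rightarrow> 'w \<Rightarrow> ('ag, 'ac, 'v) fm \<Rightarrow> bool" where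
  "sat F V w (Var p) = (w \<in> V p)"
| "sat F V w (ExConst a) = (w \<in> We F a)"
| "sat F V w (DoConst a j) = (w \<in> Wd F a j)"
| "sat F V w (Neg \<phi>) = (\<not> sat F V w \<phi>)"
| "sat F V w (Imp \<phi> \<psi>) = (sat F V w \<phi> \<longrightarrow> sat F V w \<psi>)"
| "sat F V w (Box \<phi>) = (\<forall>v. RBox F w v \<longrightarrow> sat F V v \<phi>)"
| "sat F V w (Astit \<phi>) = (\<forall>v. RA F w v \<longrightarrow> sat F V v \<phi>)"
| "sat F V w (BBox \<phi>) = (\<forall>v. RBB F w v \<longrightarrow> sat F V v \<phi>)"
| "sat F V w (Hist \<phi>) = (\<forall>v. RH F w v \<longrightarrow> sat F V v \<phi>)"

fun Wt :: "('w, 'ag, 'ac) frame \<Rightarrow> 'ac act \<Rightarrow> 'ag \<Rightarrow> 'w set" where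
  "Wt F (Basic j) a = Wd F a j"
| "Wt F (ACompl d) a = UNIV - Wt F d a"
| "Wt F (AUnion d e) a = Wt F d a \<union> Wt F e a"

definition TLAE_frame :: "('w, 'ag, 'ac) frame \<Rightarrow> bool" where
  "TLAE_frame F \<longleftrightarrow>
     (\<forall>w u v. RA F w u \<and> RA F w v \<longrightarrow> u = v)                                    \<comment> \<open>pA3\<close>
   \<and> (\<forall>w v. RA F w v \<longrightarrow> RBox F w v)                                              \<comment> \<open>pA4\<close>
   \<and> (\<forall>w (S :: 'ag set) (D :: 'ag \<Rightarrow> 'ac act). S \<noteq> {} \<longrightarrow>
        (\<forall>a\<in>S. \<exists>v. RBox F w v \<and> v \<in> Wt F (D a) a) \<longrightarrow>
        (\<exists>v. RBox F w v \<and> (\<forall>a\<in>S. v \<in> Wt F (D a) a)))                              \<comment> \<open>pA5\<close>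
   \<and> (\<forall>w a. (\<exists>v. RBox F w v \<and> v \<in> We F a) \<longrightarrow> (\<exists>v. RBox F w v \<and> v \<notin> We F a)) \<comment> \<open>pA6\<close>
   \<and> (\<forall>w v. RBox F w v \<longleftrightarrow> RBB F v w)                                            \<comment> \<open>pA10;A11\<close>
   \<and> (\<forall>w u v. RBB F w u \<and> RBB F w v \<longrightarrow> u = v)                                  \<comment> \<open>pA12\<close>
   \<and> RH F = (RBB F)\<^sup>+\<^sup>+                                                          \<comment> \<open>pA9;A14\<close>
   \<and> (\<forall>w. (\<not> (\<exists>u. RH F w u)) \<or> (\<exists>u. RH F w u \<and> \<not> (\<exists>v. RH F u v)))"

definition Sigma_set :: "'v \<Rightarrow> ('ag, 'ac, 'v) fm set" where
  "Sigma_set p = range (\<lambda>n. (BBox ^^ n) (Var p)) \<union> {Neg (Hist (Var p))}"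

end

theory Submission
  imports Defs
begin

text \<open>Since \<open>H\<close> quantifies over the transitive closure of the \<open>\<blacksquare>\<close>-relation, every
\<open>H\<close>-successor is reached in some finite number \<open>n\<close> of \<open>\<blacksquare>\<close>-steps, where \<open>\<blacksquare>\<^sup>n p\<close> forces \<open>p\<close>;
so \<open>\<not> H p\<close> contradicts the formulas \<open>\<blacksquare>\<^sup>n p\<close>.  A finite subset of \<open>\<Sigma>\<close> mentions only \<open>\<blacksquare>\<^sup>n p\<close> with
\<open>n \<le> N\<close>, and is satisfied at the start of a finite chain \<open>0 \<rightarrow> 1 \<rightarrow> \<dots> \<rightarrow> N + 1\<close> of \<open>\<blacksquare>\<close>-steps
in which \<open>p\<close> holds exactly at the first \<open>N + 1\<close> moments.\<close>

lemma sat_BBox_iterate: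
  "sat F V w ((BBox ^^ n) \<phi>) \<longleftrightarrow> (\<forall>v. (RBB F ^^ n) w v \<longrightarrow> sat F V v \<phi>)"
proof (induction n arbitrary: w)
  case 0
  then show ?case by auto
next
  case (Suc n)
  have "sat F V w ((BBox ^^ Suc n) \<phi>) \<longleftrightarrow> (\<forall>u. RBB F w u \<longrightarrow> sat F V u ((BBox ^^ n) \<phi>))"
    by simp
  also have "\<dots> \<longleftrightarrow> (\<forall>v. (RBB F OO RBB F ^^ n) w v \<longrightarrow> sat F V v \<phi>)"
    using Suc by blast
  finally show ?case
    by (simp only: relpowp_Suc_left)
qed

lemma size_BBox_iterate: "size ((BBox ^^ n) \<phi>) = n + size \<phi>"
  by (induction n) auto

lemma inj_BBox_iterate: "inj (\<lambda>n. (BBox ^^ n) \<phi>)"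
  by (rule injI) (metis size_BBox_iterate add_right_cancel)

lemma TLAE_frame_RH_tranclp: "TLAE_frame F \<Longrightarrow> RH F = (RBB F)\<^sup>+\<^sup>+"
  by (simp add: TLAE_frame_def)

lemma Sigma_set_unsatisfiable:
  assumes "RH F = (RBB F)\<^sup>+\<^sup>+"
  shows "\<not> (\<forall>\<psi>\<in>Sigma_set p. sat F V w \<psi>)"
proof
  assume sat_Sigma: "\<forall>\<psi>\<in>Sigma_set p. sat F V w \<psi>"
  then have "sat F V w (Neg (Hist (Var p)))"
    unfolding Sigma_set_def by blast
  then obtain v where "RH F w v" and "v \<notin> V p"
    by auto
  then obtain n where "(RBB F ^^ n) w v"
    using assms tranclp_power by metis
  moreover have "sat F V w ((BBox ^^ n) (Var p))"
    using sat_Sigma unfolding Sigma_set_def by blast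
  ultimately have "v \<in> V p"
    by (simp add: sat_BBox_iterate)
  with \<open>v \<notin> V p\<close> show False ..
qed

lemma finite_subset_Sigma_set_bounded:
  assumes "finite \<Gamma>" and "\<Gamma> \<subseteq> Sigma_set p"
  obtains N where "\<Gamma> \<subseteq> (\<lambda>n. (BBox ^^ n) (Var p)) ` {..N} \<union> {Neg (Hist (Var p))}"
proof -
  have "finite ((\<lambda>n. (BBox ^^ n) (Var p)) -` \<Gamma>)"
    using assms(1) inj_BBox_iterate by (rule finite_vimageI)
  then obtain N where "\<forall>n\<in>(\<lambda>n. (BBox ^^ n) (Var p)) -` \<Gamma>. n \<le> N"
    using finite_nat_set_iff_bounded_le by blast
  with assms(2) have "\<Gamma> \<subseteq> (\<lambda>n. (BBox ^^ n) (Var p)) ` {..N} \<union> {Neg (Hist (Var p))}"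
    unfolding Sigma_set_def by auto
  then show thesis ..
qed

definition succ_upto :: "nat \<Rightarrow> nat \<Rightarrow> nat \<Rightarrow> bool" where
  "succ_upto N w v \<longleftrightarrow> v = Suc w \<and> w \<le> N"

lemma relpowp_succ_upto:
  "(succ_upto N ^^ n) w v \<longleftrightarrow> v = w + n \<and> (0 < n \<longrightarrow> w + n \<le> Suc N)"
proof (induction n arbitrary: v)
  case 0
  then show ?case by auto
next
  case (Suc n)
  have "(succ_upto N ^^ Suc n) w v \<longleftrightarrow> (\<exists>u. (succ_upto N ^^ n) w u \<and> succ_upto N u v)"
    by (auto elim: relpowp_Suc_E intro: relpowp_Suc_I)
  also have "\<dots> \<longleftrightarrow> v = w + Suc n \<and> w + Suc n \<le> Suc N"
    by (auto simp: Suc.IH succ_upto_def)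
  finally show ?case by simp
qed

lemma tranclp_succ_upto: "(succ_upto N)\<^sup>+\<^sup>+ w v \<longleftrightarrow> w < v \<and> v \<le> Suc N"
proof
  assume "(succ_upto N)\<^sup>+\<^sup>+ w v"
  then obtain n where "0 < n" "(succ_upto N ^^ n) w v"
    by (auto simp: tranclp_power)
  then show "w < v \<and> v \<le> Suc N"
    by (auto simp: relpowp_succ_upto)
next
  assume "w < v \<and> v \<le> Suc N"
  then have "0 < v - w" and "(succ_upto N ^^ (v - w)) w v"
    by (auto simp: relpowp_succ_upto)
  then show "(succ_upto N)\<^sup>+\<^sup>+ w v"
    unfolding tranclp_power by blast
qed

lemma tranclp_succ_upto_endpoint:
  "(\<nexists>u. (succ_upto N)\<^sup>+\<^sup>+ w u) \<or> (\<exists>u. (succ_upto N)\<^sup>+\<^sup>+ w u \<and> (\<nexists>v. (succ_upto N)\<^sup>+\<^sup>+ u v))"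
proof (cases "w \<le> N")
  case True
  then have "(succ_upto N)\<^sup>+\<^sup>+ w (Suc N)" and "\<nexists>v. (succ_upto N)\<^sup>+\<^sup>+ (Suc N) v"
    by (auto simp: tranclp_succ_upto)
  then show ?thesis by blast
next
  case False
  then show ?thesis by (auto simp: tranclp_succ_upto)
qed

lemma agent_independence_if_RBox_unique_successor:
  assumes "\<forall>w u v. RBox F w u \<and> RBox F w v \<longrightarrow> u = v"
  shows "\<forall>w (S :: 'ag set) (D :: 'ag \<Rightarrow> 'ac act). S \<noteq> {} \<longrightarrow>
           (\<forall>a\<in>S. \<exists>v. RBox F w v \<and> v \<in> Wt F (D a) a) \<longrightarrow>
           (\<exists>v. RBox F w v \<and> (\<forall>a\<in>S. v \<in> Wt F (D a) a))"
proof (intro allI impI)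
  fix w and S :: "'ag set" and D :: "'ag \<Rightarrow> 'ac act"
  assume "S \<noteq> {}" and witnessed: "\<forall>a\<in>S. \<exists>v. RBox F w v \<and> v \<in> Wt F (D a) a"
  then obtain v where "RBox F w v"
    by blast
  with assms witnessed show "\<exists>v. RBox F w v \<and> (\<forall>a\<in>S. v \<in> Wt F (D a) a)"
    by blast
qed

definition chain_frame :: "nat \<Rightarrow> (nat, 'ag, 'ac) frame" where
  "chain_frame N = \<lparr> Wd = (\<lambda>_ _. {}), We = (\<lambda>_. {}),
      RBox = (\<lambda>w v. succ_upto N v w), RA = (\<lambda>_ _. False),
      RBB = succ_upto N, RH = (succ_upto N)\<^sup>+\<^sup>+ \<rparr>"

lemma TLAE_frame_chain_frame: "TLAE_frame (chain_frame N :: (nat, 'ag, 'ac) frame)"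
proof -
  let ?F = "chain_frame N :: (nat, 'ag, 'ac) frame"
  have "\<forall>w u v. RBox ?F w u \<and> RBox ?F w v \<longrightarrow> u = v"
    by (simp add: chain_frame_def succ_upto_def)
  then have "\<forall>w (S :: 'ag set) (D :: 'ag \<Rightarrow> 'ac act). S \<noteq> {} \<longrightarrow>
      (\<forall>a\<in>S. \<exists>v. RBox ?F w v \<and> v \<in> Wt ?F (D a) a) \<longrightarrow>
      (\<exists>v. RBox ?F w v \<and> (\<forall>a\<in>S. v \<in> Wt ?F (D a) a))"
    by (rule agent_independence_if_RBox_unique_successor)
  moreover have "\<forall>w. (\<nexists>u. RH ?F w u) \<or> (\<exists>u. RH ?F w u \<and> (\<nexists>v. RH ?F u v))"
    using tranclp_succ_upto_endpoint by (simp add: chain_frame_def)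
  moreover have "\<forall>w v. RA ?F w v \<longrightarrow> RBox ?F w v" and "\<forall>w u v. RA ?F w u \<and> RA ?F w v \<longrightarrow> u = v"
    and "\<forall>w a. (\<exists>v. RBox ?F w v \<and> v \<in> We ?F a) \<longrightarrow> (\<exists>v. RBox ?F w v \<and> v \<notin> We ?F a)"
    and "\<forall>w v. RBox ?F w v \<longleftrightarrow> RBB ?F v w"
    and "\<forall>w u v. RBB ?F w u \<and> RBB ?F w v \<longrightarrow> u = v"
    and "RH ?F = (RBB ?F)\<^sup>+\<^sup>+"
    by (simp_all add: chain_frame_def succ_upto_def)
  ultimately show ?thesis
    unfolding TLAE_frame_def by (intro conjI) assumption+
qed

lemma sat_chain_frame_Sigma_prefix:
  assumes "\<psi> \<in> (\<lambda>n. (BBox ^^ n) (Var p)) ` {..N} \<union> {Neg (Hist (Var p))}"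
  shows "sat (chain_frame N) (\<lambda>_. {..N}) 0 \<psi>"
  using assms
proof
  assume "\<psi> \<in> (\<lambda>n. (BBox ^^ n) (Var p)) ` {..N}"
  then show ?thesis
    by (auto simp: sat_BBox_iterate chain_frame_def relpowp_succ_upto)
next
  assume "\<psi> \<in> {Neg (Hist (Var p))}"
  moreover have "RH (chain_frame N) 0 (Suc N)"
    by (simp add: chain_frame_def tranclp_succ_upto)
  ultimately show ?thesis
    by auto
qed

theorem mainTheorem5:
  fixes p :: 'v
  shows "(\<not> (\<exists>(F :: ('w, 'ag :: finite, 'ac :: finite) frame) V w.
              TLAE_frame F \<and> (\<forall>\<psi>\<in>Sigma_set p. sat F V w \<psi>)))
       \<and> (\<forall>\<Gamma>. finite \<Gamma> \<and> \<Gamma> \<subseteq> Sigma_set p \<longrightarrow>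
              (\<exists>(F :: (nat, 'ag, 'ac) frame) V w.
                 TLAE_frame F \<and> (\<forall>\<psi>\<in>\<Gamma>. sat F V w \<psi>)))"
proof (intro conjI allI impI notI)
  assume "\<exists>(F :: ('w, 'ag, 'ac) frame) V w. TLAE_frame F \<and> (\<forall>\<psi>\<in>Sigma_set p. sat F V w \<psi>)"
  then obtain F :: "('w, 'ag, 'ac) frame" and V w
    where "TLAE_frame F" and sat_Sigma: "\<forall>\<psi>\<in>Sigma_set p. sat F V w \<psi>"
    by blast
  from \<open>TLAE_frame F\<close> have "RH F = (RBB F)\<^sup>+\<^sup>+"
    by (rule TLAE_frame_RH_tranclp)
  from Sigma_set_unsatisfiable[OF this] sat_Sigma show False
    by contradiction
next
  fix \<Gamma> :: "('ag, 'ac, 'v) fm set"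
  assume "finite \<Gamma> \<and> \<Gamma> \<subseteq> Sigma_set p"
  then obtain N where bound: "\<Gamma> \<subseteq> (\<lambda>n. (BBox ^^ n) (Var p)) ` {..N} \<union> {Neg (Hist (Var p))}"
    by (metis finite_subset_Sigma_set_bounded)
  have sat_\<Gamma>: "sat (chain_frame N :: (nat, 'ag, 'ac) frame) (\<lambda>_. {..N}) 0 \<psi>" if "\<psi> \<in> \<Gamma>" for \<psi>
    using subsetD[OF bound that] by (rule sat_chain_frame_Sigma_prefix)
  show "\<exists>(F :: (nat, 'ag, 'ac) frame) V w. TLAE_frame F \<and> (\<forall>\<psi>\<in>\<Gamma>. sat F V w \<psi>)"
    using TLAE_frame_chain_frame sat_\<Gamma> by blast
qed

end
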